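(* Let $B=(b_{pq})\in\mathcal A_n$ and $R_{ij}^{kl}\in E(B)$ (with $i<j$, $k<l$), and let $A=(a_{pq})$ be any real $n\times n$ matrix. Then the following are equivalent: (1) $A\in\mathcal A_n$ and $A\xrightarrow{ij,kl}B$ in the ASM graph; (2) $a_{ik}-b_{ik}=1$, $a_{il}-b_{il}=-1$, $a_{jk}-b_{jk}=-1$, $a_{jl}-b_{jl}=1$, and $a_{pq}=b_{pq}$ for every $(p,q)\notin\{(i,k),(i,l),(j,k),(j,l)\}$.
   Context: An $n\times n$ matrix $A=(a_{ij})$ is an alternating sign matrix (ASM) if all $a_{ij}\in\{-1,0,1\}$, all partial row sums $\sum_{k\le j}a_{ik}$ and partial column sums $\sum_{k\le i}a_{kj}$ lie in $\{0,1\}$, and every full row sum and column sum equals $1$; $\mathcal A_n$ is the set of $n\times n$ ASMs. The corner sum matrix is $\widetilde A(i,j)=\sum_{p\le i,q\le j}a_{pq}$, with $\widetilde A(i,j)=0$ if $i=0$ or $j=0$. For $i<j$, $k<l$ in $[n]$, $R_{ij}^{kl}=\{(p,q): i\le p<j,\ k\le q<l\}$ and $\widetilde R_{ij}^{kl}$ is its $0/1$ indicator matrix. $E(A)$ (essential rectangles): those $R_{ij}^{kl}$ with, for all $(p,q)\in R_{ij}^{kl}$, $\widetilde A(p,k)=\widetilde A(p,k-1)$, $\widetilde A(p,l)=\widetilde A(p,l-1)+1$, $\widetilde A(i,q)=\widetilde A(i-1,q)$, $\widetilde A(j,q)=\widetilde A(j-1,q)+1$. $E^*(A)$ (dual essential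 rectangles): those with $\widetilde A(p,k)=\widetilde A(p,k-1)+1$, $\widetilde A(p,l)=\widetilde A(p,l-1)$, $\widetilde A(i,q)=\widetilde A(i-1,q)+1$, $\widetilde A(j,q)=\widetilde A(j-1,q)$. The operator $r_{ij}^{kl}$ sends $A$ to the ASM with corner sum matrix $\widetilde A+\widetilde R_{ij}^{kl}$ if $R_{ij}^{kl}\in E(A)$, $\widetilde A-\widetilde R_{ij}^{kl}$ if $R_{ij}^{kl}\in E^*(A)$, $\widetilde A$ otherwise. The bigrassmannian statistic is $\beta(A)=\sum_{i,j=1}^n\min(i,j)-\sum_{i,j=1}^n\widetilde A(i,j)$. ASM graph edge: $A\xrightarrow{ij,kl}B$ if $B=r_{ij}^{kl}(A)$ and $\beta(A)<\beta(B)$. *)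

theory Defs
  imports Complex_Main
begin

text \<open>An n x n real matrix is represented as a function nat => nat => real;
  only the entries with indices in {1..n} x {1..n} are relevant.\<close>

definition is_asm :: "nat \<Rightarrow> (nat \<Rightarrow> nat \<Rightarrow> real) \<Rightarrow> bool" where
  "is_asm n A \<longleftrightarrow>
     (\<forall>p\<in>{1..n}. \<forall>q\<in>{1..n}. A p q \<in> {-1, 0, 1}) \<and>
     (\<forall>p\<in>{1..n}. \<forall>q\<in>{1..n}. (\<Sum>r\<in>{1..q}. A p r) \<in> {0, 1}) \<and>
     (\<forall>p\<in>{1..n}. \<forall>q\<in>{1..n}. (\<Sum>r\<in>{1..p}. A r q) \<in> {0, 1}) \<and>
     (\<forall>p\<in>{1..n}. (\<Sum>r\<in>{1..n}. A p r) = 1) \<and>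
     (\<forall>q\<in>{1..n}. (\<Sum>r\<in>{1..n}. A r q) = 1)"

definition cs :: "(nat \<Rightarrow> nat \<Rightarrow> real) \<Rightarrow> nat \<Rightarrow> nat \<Rightarrow> real" where
  "cs A p q = (\<Sum>x\<in>{1..p}. \<Sum>y\<in>{1..q}. A x y)"

definition rect_ind :: "nat \<Rightarrow> nat \<Rightarrow> nat \<Rightarrow> nat \<Rightarrow> nat \<Rightarrow> nat \<Rightarrow> real" where
  "rect_ind i j k l p q = (if i \<le> p \<and> p < j \<and> k \<le> q \<and> q < l then 1 else 0)"

definition ess_rect :: "(nat \<Rightarrow> nat \<Rightarrow> real) \<Rightarrow> nat \<Rightarrow> nat \<Rightarrow> nat \<Rightarrow> nat \<Rightarrow> bool" where
  "ess_rect A i j k l \<longleftrightarrow>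
     (\<forall>p q. i \<le> p \<and> p < j \<and> k \<le> q \<and> q < l \<longrightarrow>
        cs A p k = cs A p (k - 1) \<and>
        cs A p l = cs A p (l - 1) + 1 \<and>
        cs A i q = cs A (i - 1) q \<and>
        cs A j q = cs A (j - 1) q + 1)"

definition dual_ess_rect :: "(nat \<Rightarrow> nat \<Rightarrow> real) \<Rightarrow> nat \<Rightarrow> nat \<Rightarrow> nat \<Rightarrow> nat \<Rightarrow> bool" where
  "dual_ess_rect A i j k l \<longleftrightarrow>
     (\<forall>p q. i \<le> p \<and> p < j \<and> k \<le> q \<and> q < l \<longrightarrow>
        cs A p k = cs A p (k - 1) + 1 \<and>
        cs A p l = cs A p (l - 1) \<and>
        cs A i q = cs A (i - 1) q + 1 \<and>
        cs A j q = cs A (j - 1) q)"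

definition r_cs :: "nat \<Rightarrow> nat \<Rightarrow> nat \<Rightarrow> nat \<Rightarrow> (nat \<Rightarrow> nat \<Rightarrow> real) \<Rightarrow> nat \<Rightarrow> nat \<Rightarrow> real" where
  "r_cs i j k l A p q =
     (if ess_rect A i j k l then cs A p q + rect_ind i j k l p q
      else if dual_ess_rect A i j k l then cs A p q - rect_ind i j k l p q
      else cs A p q)"

definition beta :: "nat \<Rightarrow> (nat \<Rightarrow> nat \<Rightarrow> real) \<Rightarrow> real" where
  "beta n A = (\<Sum>p\<in>{1..n}. \<Sum>q\<in>{1..n}. real (min p q)) - (\<Sum>p\<in>{1..n}. \<Sum>q\<in>{1..n}. cs A p q)"

text \<open>ASM graph edge A --(ij,kl)--> B: B = r_ij^kl(A) (B is the n x n ASM whose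
  corner sum matrix is that of r_ij^kl(A)) and beta(A) < beta(B).\<close>
definition asm_edge :: "nat \<Rightarrow> nat \<Rightarrow> nat \<Rightarrow> nat \<Rightarrow> nat \<Rightarrow> (nat \<Rightarrow> nat \<Rightarrow> real) \<Rightarrow> (nat \<Rightarrow> nat \<Rightarrow> real) \<Rightarrow> bool" where
  "asm_edge n i j k l A B \<longleftrightarrow>
     is_asm n B \<and>
     (\<forall>p\<in>{1..n}. \<forall>q\<in>{1..n}. cs B p q = r_cs i j k l A p q) \<and>
     beta n A < beta n B"

end

theory Submission
  imports Defs
begin

text \<open>Condition (2) says \<open>A = B + (e\<^sub>i - e\<^sub>j)(e\<^sub>k - e\<^sub>l)\<^sup>T\<close>, and the corner sum
  matrix of this rank-one matrix is the indicator \<open>R\<close> of \<open>R\<^sub>i\<^sub>j\<^sup>k\<^sup>l\<close>; so (2) says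
  \<open>cs A = cs B + R\<close>.
  In (1), \<open>\<beta>\<close> strictly increases, so \<open>r\<^sub>i\<^sub>j\<^sup>k\<^sup>l\<close> moves \<open>A\<close>, and \<open>R\<close> cannot be
  essential for \<open>A\<close> (then \<open>\<beta>\<close> would drop): it is dual essential and \<open>cs B = cs A - R\<close>.
  Conversely, if \<open>cs A = cs B + R\<close>, then \<open>R\<close>, being essential for \<open>B\<close>, is dual essential
  for \<open>A\<close>; and \<open>A\<close> is an ASM because its partial row sums differ from those of \<open>B\<close>
  only in rows \<open>i\<close> and \<open>j\<close> at columns \<open>k..l-1\<close>, where essentiality makes them \<open>0\<close>
  and \<open>1\<close> for \<open>B\<close> and they are exchanged in \<open>A\<close>. Columns are the transposed case.\<close>

lemma cs_zero_left [simp]: "cs A 0 q = 0"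
  by (simp add: cs_def)

lemma cs_zero_right [simp]: "cs A p 0 = 0"
  by (simp add: cs_def)

lemma cs_row: "1 \<le> p \<Longrightarrow> cs A p q = cs A (p - 1) q + (\<Sum>y\<in>{1..q}. A p y)"
  unfolding cs_def by (cases p) (auto simp: sum.cl_ivl_Suc)

(* Use only instantiated: as a simp rule it also rewrites cs B itself,
   taking A := (\<lambda>p q. B q p), and loops. *)
lemma cs_transpose: "cs (\<lambda>p q. A q p) p q = cs A q p"
  unfolding cs_def by (rule sum.swap)

lemma entry_eq_cs:
  assumes "1 \<le> p" "1 \<le> q"
  shows "A p q = cs A p q - cs A (p - 1) q - cs A p (q - 1) + cs A (p - 1) (q - 1)"
proof -
  obtain q' where "q = Suc q'" using assms(2) by (cases q) auto
  then show ?thesis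
    using cs_row[OF assms(1), of A q] cs_row[OF assms(1), of A "q - 1"]
    by (simp add: sum.cl_ivl_Suc)
qed

lemma entries_eq_iff_cs_eq:
  "(\<forall>p\<in>{1..n}. \<forall>q\<in>{1..n}. A p q = C p q) \<longleftrightarrow> (\<forall>x\<le>n. \<forall>y\<le>n. cs A x y = cs C x y)"
proof
  assume "\<forall>p\<in>{1..n}. \<forall>q\<in>{1..n}. A p q = C p q"
  then show "\<forall>x\<le>n. \<forall>y\<le>n. cs A x y = cs C x y"
    unfolding cs_def by (auto intro!: sum.cong)
next
  assume "\<forall>x\<le>n. \<forall>y\<le>n. cs A x y = cs C x y"
  then have cs_eq: "\<And>x y. x \<le> n \<Longrightarrow> y \<le> n \<Longrightarrow> cs A x y = cs C x y"
    by blast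
  show "\<forall>p\<in>{1..n}. \<forall>q\<in>{1..n}. A p q = C p q"
  proof (intro ballI)
    fix p q assume "p \<in> {1..n}" "q \<in> {1..n}"
    then have "1 \<le> p" "1 \<le> q" "p \<le> n" "q \<le> n" "p - 1 \<le> n" "q - 1 \<le> n"
      by auto
    then show "A p q = C p q"
      using entry_eq_cs[of p q A] entry_eq_cs[of p q C] cs_eq[of p q] cs_eq[of "p - 1" q]
        cs_eq[of p "q - 1"] cs_eq[of "p - 1" "q - 1"]
      by linarith
  qed
qed

definition swap_matrix :: "nat \<Rightarrow> nat \<Rightarrow> nat \<Rightarrow> nat \<Rightarrow> nat \<Rightarrow> nat \<Rightarrow> real" where
  "swap_matrix i j k l p q = (of_bool (p = i) - of_bool (p = j)) * (of_bool (q = k) - of_bool (q = l))"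

lemma cs_add: "cs (\<lambda>p q. A p q + C p q) x y = cs A x y + cs C x y"
  unfolding cs_def by (simp add: sum.distrib)

lemma sum_of_bool_eq: "1 \<le> a \<Longrightarrow> (\<Sum>p\<in>{1..x}. of_bool (p = a) :: real) = of_bool (a \<le> x)"
  for a x :: nat
  by (simp add: sum.If_cases)

lemma cs_swap_matrix:
  assumes "1 \<le> i" "i < j" "1 \<le> k" "k < l"
  shows "cs (swap_matrix i j k l) x y = rect_ind i j k l x y"
proof -
  have "cs (swap_matrix i j k l) x y
      = (\<Sum>p\<in>{1..x}. of_bool (p = i) - of_bool (p = j)) * (\<Sum>q\<in>{1..y}. of_bool (q = k) - of_bool (q = l))"
    unfolding cs_def swap_matrix_def by (simp add: sum_product)
  also have "\<dots> = (of_bool (i \<le> x) - of_bool (j \<le> x)) * (of_bool (k \<le> y) - of_bool (l \<le> y))"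
    using assms by (simp only: sum_subtractf sum_of_bool_eq[of i] sum_of_bool_eq[of j]
        sum_of_bool_eq[of k] sum_of_bool_eq[of l] finite_atLeastAtMost)
  finally show ?thesis
    using assms by (auto simp: rect_ind_def)
qed

lemma entries_eq_add_swap_matrix_iff_cs:
  assumes "1 \<le> i" "i < j" "1 \<le> k" "k < l"
  shows "(\<forall>p\<in>{1..n}. \<forall>q\<in>{1..n}. A p q = B p q + swap_matrix i j k l p q) \<longleftrightarrow>
    (\<forall>x\<le>n. \<forall>y\<le>n. cs A x y = cs B x y + rect_ind i j k l x y)"
  using entries_eq_iff_cs_eq[of n A "\<lambda>p q. B p q + swap_matrix i j k l p q"]
  by (simp add: cs_add cs_swap_matrix[OF assms])

lemma entries_eq_add_swap_matrix_iff:
  assumes "1 \<le> i" "i < j" "j \<le> n" "1 \<le> k" "k < l" "l \<le> n"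
  shows "(\<forall>p\<in>{1..n}. \<forall>q\<in>{1..n}. A p q = B p q + swap_matrix i j k l p q) \<longleftrightarrow>
    (A i k - B i k = 1 \<and> A i l - B i l = -1 \<and> A j k - B j k = -1 \<and> A j l - B j l = 1 \<and>
     (\<forall>p\<in>{1..n}. \<forall>q\<in>{1..n}. (p, q) \<notin> {(i, k), (i, l), (j, k), (j, l)} \<longrightarrow> A p q = B p q))"
    (is "?entries \<longleftrightarrow> ?changes")
proof -
  have corners: "swap_matrix i j k l i k = 1" "swap_matrix i j k l i l = -1"
    "swap_matrix i j k l j k = -1" "swap_matrix i j k l j l = 1"
    using assms by (auto simp: swap_matrix_def)
  have outside: "swap_matrix i j k l p q = 0" if "(p, q) \<notin> {(i, k), (i, l), (j, k), (j, l)}" for p q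
    using that by (auto simp: swap_matrix_def)
  show ?thesis
  proof
    assume entries: ?entries
    then have "\<forall>p\<in>{1..n}. \<forall>q\<in>{1..n}. (p, q) \<notin> {(i, k), (i, l), (j, k), (j, l)} \<longrightarrow> A p q = B p q"
      using outside by simp
    then show ?changes
      using entries[rule_format, of i k] entries[rule_format, of i l]
        entries[rule_format, of j k] entries[rule_format, of j l] assms corners
      by simp
  next
    assume changes: ?changes
    show ?entries
    proof (intro ballI)
      fix p q assume "p \<in> {1..n}" "q \<in> {1..n}"
      then show "A p q = B p q + swap_matrix i j k l p q"
        using changes corners outside[of p q]
        by (cases "(p, q) \<in> {(i, k), (i, l), (j, k), (j, l)}") auto
    qed
  qed
qed

lemma beta_shift:
  assumes "\<forall>p\<in>{1..n}. \<forall>q\<in>{1..n}. cs C p q = cs A p q + F p q"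
  shows "beta n C = beta n A - (\<Sum>p\<in>{1..n}. \<Sum>q\<in>{1..n}. F p q)"
proof -
  have "(\<Sum>p\<in>{1..n}. \<Sum>q\<in>{1..n}. cs C p q) = (\<Sum>p\<in>{1..n}. \<Sum>q\<in>{1..n}. cs A p q + F p q)"
    using assms by (intro sum.cong refl) auto
  then show ?thesis
    by (simp add: beta_def sum.distrib)
qed

lemma sum_rect_ind_pos:
  assumes "1 \<le> i" "i < j" "j \<le> n" "1 \<le> k" "k < l" "l \<le> n"
  shows "(\<Sum>p\<in>{1..n}. \<Sum>q\<in>{1..n}. rect_ind i j k l p q) > 0"
proof -
  have nonneg: "rect_ind i j k l p q \<ge> 0" for p q
    by (simp add: rect_ind_def)
  have "0 < rect_ind i j k l i k"
    using assms by (simp add: rect_ind_def)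
  also have "\<dots> \<le> (\<Sum>q\<in>{1..n}. rect_ind i j k l i q)"
    using assms nonneg by (intro member_le_sum) auto
  also have "\<dots> \<le> (\<Sum>p\<in>{1..n}. \<Sum>q\<in>{1..n}. rect_ind i j k l p q)"
    using assms nonneg
    by (intro member_le_sum[where f = "\<lambda>p. \<Sum>q\<in>{1..n}. rect_ind i j k l p q"] sum_nonneg) auto
  finally show ?thesis .
qed

lemma not_ess_rect_if_dual_ess_rect:
  assumes "dual_ess_rect A i j k l" "i < j" "k < l"
  shows "\<not> ess_rect A i j k l"
  using assms unfolding ess_rect_def dual_ess_rect_def by force

lemma dual_ess_rect_if_cs_shift:
  assumes ess: "ess_rect B i j k l"
    and bounds: "1 \<le> i" "i < j" "j \<le> n" "1 \<le> k" "k < l" "l \<le> n"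
    and shift: "\<forall>x\<le>n. \<forall>y\<le>n. cs A x y = cs B x y + rect_ind i j k l x y"
  shows "dual_ess_rect A i j k l"
  unfolding dual_ess_rect_def
proof (intro allI impI)
  fix p q assume pq: "i \<le> p \<and> p < j \<and> k \<le> q \<and> q < l"
  have "cs A x y = cs B x y + rect_ind i j k l x y"
    if "x \<in> {p, i - 1, i, j - 1, j}" "y \<in> {q, k - 1, k, l - 1, l}" for x y
    using that pq bounds shift by auto
  then show "cs A p k = cs A p (k - 1) + 1 \<and> cs A p l = cs A p (l - 1) \<and>
      cs A i q = cs A (i - 1) q + 1 \<and> cs A j q = cs A (j - 1) q"
    using ess pq bounds unfolding ess_rect_def by (auto simp: rect_ind_def)
qed

lemma asm_edge_imp_cs_shift:
  assumes edge: "asm_edge n i j k l A B"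
    and bounds: "1 \<le> i" "i < j" "j \<le> n" "1 \<le> k" "k < l" "l \<le> n"
  shows "\<forall>x\<le>n. \<forall>y\<le>n. cs A x y = cs B x y + rect_ind i j k l x y"
proof -
  have r: "\<forall>p\<in>{1..n}. \<forall>q\<in>{1..n}. cs B p q = r_cs i j k l A p q"
    and beta_less: "beta n A < beta n B"
    using edge by (auto simp: asm_edge_def)
  have not_ess: "\<not> ess_rect A i j k l"
  proof
    assume "ess_rect A i j k l"
    then have "\<forall>p\<in>{1..n}. \<forall>q\<in>{1..n}. cs B p q = cs A p q + rect_ind i j k l p q"
      using r by (simp add: r_cs_def)
    from beta_shift[OF this] sum_rect_ind_pos[OF bounds] beta_less show False
      by simp
  qed
  have dual: "dual_ess_rect A i j k l"
  proof (rule ccontr)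
    assume "\<not> dual_ess_rect A i j k l"
    then have "\<forall>p\<in>{1..n}. \<forall>q\<in>{1..n}. cs B p q = cs A p q + 0"
      using r not_ess by (simp add: r_cs_def)
    from beta_shift[OF this] beta_less show False
      by simp
  qed
  show ?thesis
  proof (intro allI impI)
    fix x y assume "x \<le> n" "y \<le> n"
    then show "cs A x y = cs B x y + rect_ind i j k l x y"
      using r not_ess dual bounds
      by (cases "x = 0 \<or> y = 0") (auto simp: r_cs_def rect_ind_def)
  qed
qed

lemma asm_edge_if_cs_shift:
  assumes "is_asm n B" "ess_rect B i j k l"
    and bounds: "1 \<le> i" "i < j" "j \<le> n" "1 \<le> k" "k < l" "l \<le> n"
    and shift: "\<forall>x\<le>n. \<forall>y\<le>n. cs A x y = cs B x y + rect_ind i j k l x y"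
  shows "asm_edge n i j k l A B"
proof -
  have dual: "dual_ess_rect A i j k l"
    using dual_ess_rect_if_cs_shift assms by blast
  then have "\<not> ess_rect A i j k l"
    using not_ess_rect_if_dual_ess_rect bounds by blast
  with dual shift have "\<forall>p\<in>{1..n}. \<forall>q\<in>{1..n}. cs B p q = r_cs i j k l A p q"
    by (simp add: r_cs_def)
  moreover have "beta n A < beta n B"
    using beta_shift[of n A B "rect_ind i j k l"] shift sum_rect_ind_pos[OF bounds] by simp
  ultimately show ?thesis
    using \<open>is_asm n B\<close> by (simp add: asm_edge_def)
qed

definition asm_rows :: "nat \<Rightarrow> (nat \<Rightarrow> nat \<Rightarrow> real) \<Rightarrow> bool" where
  "asm_rows n A \<longleftrightarrow>
     (\<forall>p\<in>{1..n}. \<forall>q\<in>{1..n}. (\<Sum>r\<in>{1..q}. A p r) \<in> {0, 1}) \<and>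
     (\<forall>p\<in>{1..n}. (\<Sum>r\<in>{1..n}. A p r) = 1)"

lemma is_asm_iff_asm_rows: "is_asm n A \<longleftrightarrow> asm_rows n A \<and> asm_rows n (\<lambda>p q. A q p)"
proof
  assume rows_cols: "asm_rows n A \<and> asm_rows n (\<lambda>p q. A q p)"
  have rows: "(\<Sum>r\<in>{1..q}. A p r) \<in> {0, 1}" if "p \<in> {1..n}" "q \<le> n" for p q
    using rows_cols that unfolding asm_rows_def by (cases "q = 0") auto
  have "A p q \<in> {-1, 0, 1}" if "p \<in> {1..n}" "q \<in> {1..n}" for p q
  proof -
    have "A p q = (\<Sum>r\<in>{1..q}. A p r) - (\<Sum>r\<in>{1..q - 1}. A p r)"
      using that by (cases q) (auto simp: sum.cl_ivl_Suc)
    then show ?thesis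
      using that rows[of p q] rows[of p "q - 1"] by auto
  qed
  with rows_cols show "is_asm n A"
    unfolding is_asm_def asm_rows_def by blast
qed (auto simp: is_asm_def asm_rows_def)

lemma rect_ind_row_diff:
  assumes "1 \<le> i" "i < j" "1 \<le> p"
  shows "rect_ind i j k l p q - rect_ind i j k l (p - 1) q
    = of_bool (k \<le> q \<and> q < l) * (of_bool (p = i) - of_bool (p = j))"
  using assms by (auto simp: rect_ind_def)

lemma partial_row_sum_shift:
  assumes "1 \<le> i" "i < j" "1 \<le> p" "p \<le> n" "q \<le> n"
    and shift: "\<forall>x\<le>n. \<forall>y\<le>n. cs A x y = cs B x y + rect_ind i j k l x y"
  shows "(\<Sum>r\<in>{1..q}. A p r)
    = (\<Sum>r\<in>{1..q}. B p r) + of_bool (k \<le> q \<and> q < l) * (of_bool (p = i) - of_bool (p = j))"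
  using cs_row[of p A q] cs_row[of p B q] rect_ind_row_diff[of i j p k l q]
    shift[rule_format, of p q] shift[rule_format, of "p - 1" q] assms(1-5)
  by simp

lemma asm_rows_if_cs_shift:
  assumes "asm_rows n B" "ess_rect B i j k l"
    and bounds: "1 \<le> i" "i < j" "j \<le> n" "1 \<le> k" "k < l" "l \<le> n"
    and shift: "\<forall>x\<le>n. \<forall>y\<le>n. cs A x y = cs B x y + rect_ind i j k l x y"
  shows "asm_rows n A"
proof -
  have B_rows: "(\<Sum>r\<in>{1..q}. B i r) = 0" "(\<Sum>r\<in>{1..q}. B j r) = 1" if "k \<le> q" "q < l" for q
    using \<open>ess_rect B i j k l\<close> that bounds cs_row[of i B q] cs_row[of j B q]
    unfolding ess_rect_def by force+
  have A_rows: "(\<Sum>r\<in>{1..q}. A p r)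
      = (\<Sum>r\<in>{1..q}. B p r) + of_bool (k \<le> q \<and> q < l) * (of_bool (p = i) - of_bool (p = j))"
    if "p \<in> {1..n}" "q \<le> n" for p q
    using partial_row_sum_shift[OF bounds(1,2) _ _ _ shift] that by simp
  show ?thesis
    unfolding asm_rows_def
  proof (intro conjI ballI)
    fix p q assume "p \<in> {1..n}" "q \<in> {1..n}"
    then show "(\<Sum>r\<in>{1..q}. A p r) \<in> {0, 1}"
      using A_rows[of p q] B_rows[of q] \<open>asm_rows n B\<close> \<open>i < j\<close>
      unfolding asm_rows_def by (cases "k \<le> q \<and> q < l") auto
  next
    fix p assume "p \<in> {1..n}"
    then show "(\<Sum>r\<in>{1..n}. A p r) = 1"
      using A_rows[of p n] \<open>asm_rows n B\<close> \<open>l \<le> n\<close> unfolding asm_rows_def by simp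
  qed
qed

lemma rect_ind_transpose: "rect_ind i j k l q p = rect_ind k l i j p q"
  by (auto simp: rect_ind_def)

lemma ess_rect_transpose: "ess_rect (\<lambda>p q. B q p) k l i j \<longleftrightarrow> ess_rect B i j k l"
  unfolding ess_rect_def cs_transpose[of B] by blast

lemma is_asm_if_cs_shift:
  assumes "is_asm n B" "ess_rect B i j k l"
    and bounds: "1 \<le> i" "i < j" "j \<le> n" "1 \<le> k" "k < l" "l \<le> n"
    and shift: "\<forall>x\<le>n. \<forall>y\<le>n. cs A x y = cs B x y + rect_ind i j k l x y"
  shows "is_asm n A"
proof -
  have "asm_rows n A"
    using asm_rows_if_cs_shift assms is_asm_iff_asm_rows by blast
  moreover have "asm_rows n (\<lambda>p q. A q p)"
  proof (rule asm_rows_if_cs_shift)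
    show "asm_rows n (\<lambda>p q. B q p)"
      using \<open>is_asm n B\<close> is_asm_iff_asm_rows by blast
    show "ess_rect (\<lambda>p q. B q p) k l i j"
      using \<open>ess_rect B i j k l\<close> ess_rect_transpose by blast
    show "\<forall>x\<le>n. \<forall>y\<le>n. cs (\<lambda>p q. A q p) x y = cs (\<lambda>p q. B q p) x y + rect_ind k l i j x y"
      using shift by (simp add: cs_transpose[of A] cs_transpose[of B] rect_ind_transpose)
  qed (use bounds in auto)
  ultimately show ?thesis
    using is_asm_iff_asm_rows by blast
qed

theorem mainTheorem6:
  fixes n i j k l :: nat and A B :: "nat \<Rightarrow> nat \<Rightarrow> real"
  assumes "is_asm n B"
    and "1 \<le> i" and "i < j" and "j \<le> n"
    and "1 \<le> k" and "k < l" and "l \<le> n"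
    and "ess_rect B i j k l"
  shows "(is_asm n A \<and> asm_edge n i j k l A B) \<longleftrightarrow>
     (A i k - B i k = 1 \<and> A i l - B i l = -1 \<and>
      A j k - B j k = -1 \<and> A j l - B j l = 1 \<and>
      (\<forall>p\<in>{1..n}. \<forall>q\<in>{1..n}. (p, q) \<notin> {(i, k), (i, l), (j, k), (j, l)} \<longrightarrow> A p q = B p q))"
proof -
  note bounds = assms(2-7)
  have "(is_asm n A \<and> asm_edge n i j k l A B)
      \<longleftrightarrow> (\<forall>x\<le>n. \<forall>y\<le>n. cs A x y = cs B x y + rect_ind i j k l x y)"
    using asm_edge_imp_cs_shift[OF _ bounds] asm_edge_if_cs_shift[OF assms(1,8) bounds]
      is_asm_if_cs_shift[OF assms(1,8) bounds] by blast
  also have "\<dots> \<longleftrightarrow> (\<forall>p\<in>{1..n}. \<forall>q\<in>{1..n}. A p q = B p q + swap_matrix i j k l p q)"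
    using entries_eq_add_swap_matrix_iff_cs[of i j k l n A B] bounds by simp
  also note entries_eq_add_swap_matrix_iff[OF bounds]
  finally show ?thesis .
qed

end
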